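(* Let $n\ge1$, $\omega\in(0,1)$, and let $B_1,\dots,B_n$ be independent real-valued service times with finite means $\mu_i$ and variances, satisfying $B_1\le_{\mathrm{dil}}\cdots\le_{\mathrm{dil}}B_n$. Use the mean-based schedule. For $k\in\{1,\dots,n-1\}$, let $\mathbb EW^{\mathrm{SVF}}_{k+1}$ be the expected waiting time of slot $k+1$ under the identity sequence, and let $\mathbb EW^{\mathrm{OPT}'}_{k+1}$ be the minimum of $\mathbb EW_{k+1}$ over all sequences $\tau$ with $\tau(i)\le k$ for all $i=1,\dots,k$. Suppose $\varrho'$ is such that $\mathbb EW^{\mathrm{SVF}}_{k+1}/\mathbb EW^{\mathrm{OPT}'}_{k+1}\le\varrho'$ for all $k$. Then $\varrho_\omega\le\varrho'$, where $\varrho_\omega=C(\mathrm{Id},\boldsymbol\mu,\omega)/\min_{\tau\in\mathsf S_n}C(\tau,\boldsymbol\mu,\omega)$.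
   Context: Appointment model: a sequence is a permutation $\tau\in\mathsf S_n$, $\tau(i)$ the patient in slot $i$; a schedule is $\boldsymbol x=(x_1,\dots,x_n)$, $x_j$ the interarrival time between patient $j$ and the next patient; the mean-based schedule is $\boldsymbol\mu=(\mu_1,\dots,\mu_n)$. Waiting and idle times: $W_1=I_1=0$, $W_{i+1}=(W_i+B_{\tau(i)}-x_{\tau(i)})^+$, $I_{i+1}=(W_i+B_{\tau(i)}-x_{\tau(i)})^-$, $a^+=\max\{0,a\}$, $a^-=\max\{0,-a\}$. Cost $C(\tau,\boldsymbol x,\omega)=\omega\sum_{i=1}^n\mathbb EI_i+(1-\omega)\sum_{i=1}^n\mathbb EW_i$. $\mathrm{Id}$ is the identity permutation. $X\le_{\mathrm{cx}}Y$ means $\mathbb E\phi(X)\le\mathbb E\phi(Y)$ for all convex $\phi$ for which the expectations exist; $X\le_{\mathrm{dil}}Y$ means $X-\mathbb EX\le_{\mathrm{cx}}Y-\mathbb EY$. *)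

theory Defs
  imports "HOL-Probability.Probability" "HOL-Combinatorics.Permutations"
begin

definition cx_le :: "'a measure \<Rightarrow> ('a \<Rightarrow> real) \<Rightarrow> ('a \<Rightarrow> real) \<Rightarrow> bool" where
  "cx_le M X Y \<longleftrightarrow>
     (\<forall>\<phi>::real \<Rightarrow> real. convex_on UNIV \<phi> \<longrightarrow>
        integrable M (\<lambda>s. \<phi> (X s)) \<longrightarrow> integrable M (\<lambda>s. \<phi> (Y s)) \<longrightarrow>
        (\<integral>s. \<phi> (X s) \<partial>M) \<le> (\<integral>s. \<phi> (Y s) \<partial>M))"

definition dil_le :: "'a measure \<Rightarrow> ('a \<Rightarrow> real) \<Rightarrow> ('a \<Rightarrow> real) \<Rightarrow> bool" where
  "dil_le M X Y \<longleftrightarrow>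
     cx_le M (\<lambda>s. X s - integral\<^sup>L M X) (\<lambda>s. Y s - integral\<^sup>L M Y)"

text \<open>Waiting time W_i (slots indexed from 1) for service times B, schedule x,
  sequence tau, at sample point s: W_1 = 0, W_(i+1) = (W_i + B_tau(i) - x_tau(i))^+.\<close>
fun wait :: "(nat \<Rightarrow> 'a \<Rightarrow> real) \<Rightarrow> (nat \<Rightarrow> real) \<Rightarrow> (nat \<Rightarrow> nat) \<Rightarrow> nat \<Rightarrow> 'a \<Rightarrow> real" where
  "wait B x \<tau> 0 s = 0"
| "wait B x \<tau> (Suc 0) s = 0"
| "wait B x \<tau> (Suc (Suc i)) s =
     max 0 (wait B x \<tau> (Suc i) s + B (\<tau> (Suc i)) s - x (\<tau> (Suc i)))"

fun idle :: "(nat \<Rightarrow> 'a \<Rightarrow> real) \<Rightarrow> (nat \<Rightarrow> real) \<Rightarrow> (nat \<Rightarrow> nat) \<Rightarrow> nat \<Rightarrow> 'a \<Rightarrow> real" where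
  "idle B x \<tau> 0 s = 0"
| "idle B x \<tau> (Suc 0) s = 0"
| "idle B x \<tau> (Suc (Suc i)) s =
     max 0 (- (wait B x \<tau> (Suc i) s + B (\<tau> (Suc i)) s - x (\<tau> (Suc i))))"

definition cost :: "'a measure \<Rightarrow> nat \<Rightarrow> (nat \<Rightarrow> 'a \<Rightarrow> real) \<Rightarrow> (nat \<Rightarrow> nat) \<Rightarrow> (nat \<Rightarrow> real) \<Rightarrow> real \<Rightarrow> real" where
  "cost M n B \<tau> x w =
     w * (\<Sum>i=1..n. integral\<^sup>L M (idle B x \<tau> i))
     + (1 - w) * (\<Sum>i=1..n. integral\<^sup>L M (wait B x \<tau> i))"

definition mean_sched :: "'a measure \<Rightarrow> (nat \<Rightarrow> 'a \<Rightarrow> real) \<Rightarrow> nat \<Rightarrow> real" where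
  "mean_sched M B j = integral\<^sup>L M (B j)"

definition EW_SVF :: "'a measure \<Rightarrow> (nat \<Rightarrow> 'a \<Rightarrow> real) \<Rightarrow> nat \<Rightarrow> real" where
  "EW_SVF M B k = integral\<^sup>L M (wait B (mean_sched M B) id (Suc k))"

definition EW_OPT' :: "'a measure \<Rightarrow> nat \<Rightarrow> (nat \<Rightarrow> 'a \<Rightarrow> real) \<Rightarrow> nat \<Rightarrow> real" where
  "EW_OPT' M n B k = Min {integral\<^sup>L M (wait B (mean_sched M B) \<tau> (Suc k)) | \<tau>.
       \<tau> permutes {1..n} \<and> (\<forall>i\<in>{1..k}. \<tau> i \<le> k)}"

definition rho :: "'a measure \<Rightarrow> nat \<Rightarrow> (nat \<Rightarrow> 'a \<Rightarrow> real) \<Rightarrow> real \<Rightarrow> real" where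
  "rho M n B w = cost M n B id (mean_sched M B) w /
     Min {cost M n B \<tau> (mean_sched M B) w | \<tau>. \<tau> permutes {1..n}}"

end

theory Submission
  imports Defs
begin

(* Under the mean-based schedule E(W_i + B_tau(i) - mu_tau(i)) = E W_i, so the expected idle
   times telescope and C(tau, mu, w) = w E W_n + (1 - w) sum_i E W_i: it suffices to compare the
   identity with an optimal sequence tau slot by slot. Given tau and a slot k + 1, some sigma
   permuting {1..k} has sigma(i) <= tau(i) for i <= k. The waiting time W_(k+1) is the Lindley
   recursion of the independent centred service times of the first k slots, and as a function of
   any single one of them it is convex and 1-Lipschitz; so by the dilation order, replacing the
   service times of tau one at a time by those of sigma does not increase E W_(k+1). Hence
   E W^OPT'_(k+1) <= E W^tau_(k+1), and the ratio bound gives E W^SVF_(k+1) <= rho' E W^tau_(k+1). *)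

section \<open>The Lindley recursion\<close>

fun lindley :: "nat \<Rightarrow> (nat \<Rightarrow> real) \<Rightarrow> real" where
  "lindley 0 c = 0"
| "lindley (Suc i) c = max 0 (lindley i c + c (Suc i))"

lemma lindley_nonneg: "0 \<le> lindley i c"
  by (cases i) auto

lemma lindley_cong: "(\<And>l. l \<in> {1..i} \<Longrightarrow> c l = c' l) \<Longrightarrow> lindley i c = lindley i c'"
  by (induction i) auto

lemma lindley_le_sum_abs: "lindley i c \<le> (\<Sum>l=1..i. \<bar>c l\<bar>)"
  by (induction i) (auto intro: lindley_nonneg)

lemma wait_eq_lindley: "wait B x \<tau> (Suc i) s = lindley i (\<lambda>l. B (\<tau> l) s - x (\<tau> l))"
  by (induction i) auto

lemma wait_nonneg: "0 \<le> wait B x \<tau> i s"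
  by (cases i) (simp_all add: wait_eq_lindley lindley_nonneg)

lemma positive_part_le_wait:
  assumes "1 \<le> j"
  shows "max 0 (B (\<tau> j) s - x (\<tau> j)) \<le> wait B x \<tau> (Suc j) s"
proof -
  obtain i where "j = Suc i" using assms by (cases j) auto
  then show ?thesis using wait_nonneg[of B x \<tau> "Suc i" s] by auto
qed

lemma wait_le_sum_abs: "wait B x \<tau> (Suc k) s \<le> (\<Sum>l=1..k. \<bar>B (\<tau> l) s - x (\<tau> l)\<bar>)"
  unfolding wait_eq_lindley by (rule lindley_le_sum_abs)

lemma convex_on_max:
  assumes f: "convex_on S f" and g: "convex_on S g"
  shows "convex_on S (\<lambda>x. max (f x) (g x))"
  unfolding convex_on_def
proof (intro conjI ballI allI impI)
  show "convex S" using f by (simp add: convex_on_def)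
  fix x y and u v :: real
  assume xy: "x \<in> S" "y \<in> S" and uv: "0 \<le> u" "0 \<le> v" "u + v = 1"
  have "u * f x + v * f y \<le> u * max (f x) (g x) + v * max (f y) (g y)"
    "u * g x + v * g y \<le> u * max (f x) (g x) + v * max (f y) (g y)"
    using uv by (intro add_mono mult_left_mono; simp)+
  moreover have "f (u *\<^sub>R x + v *\<^sub>R y) \<le> u * f x + v * f y"
    "g (u *\<^sub>R x + v *\<^sub>R y) \<le> u * g x + v * g y"
    using f g xy uv by (auto simp: convex_on_def)
  ultimately show "max (f (u *\<^sub>R x + v *\<^sub>R y)) (g (u *\<^sub>R x + v *\<^sub>R y))
      \<le> u * max (f x) (g x) + v * max (f y) (g y)"
    by simp
qed

lemma convex_on_lindley_update: "convex_on UNIV (\<lambda>t. lindley i (c(j := t)))"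
proof (induction i)
  case (Suc i)
  have "convex_on UNIV (\<lambda>t. (c(j := t)) (Suc i))"
    by (cases "Suc i = j") (simp_all add: convex_on_ident convex_on_const)
  with Suc.IH have "convex_on UNIV (\<lambda>t. lindley i (c(j := t)) + (c(j := t)) (Suc i))"
    by (rule convex_on_add)
  then have "convex_on UNIV (\<lambda>t. max 0 (lindley i (c(j := t)) + (c(j := t)) (Suc i)))"
    by (rule convex_on_max[rotated]) (simp add: convex_on_const)
  then show ?case by (simp only: lindley.simps)
qed (simp add: convex_on_const)

lemma lipschitz_lindley_update: "1-lipschitz_on UNIV (\<lambda>t. lindley i (c(j := t)))"
proof (induction i)
  case (Suc i)
  show ?case
  proof (rule lipschitz_onI)
    fix t t' :: real
    have "\<bar>(lindley i (c(j := t)) + (c(j := t)) (Suc i))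
          - (lindley i (c(j := t')) + (c(j := t')) (Suc i))\<bar> \<le> \<bar>t - t'\<bar>"
    proof (cases "Suc i = j")
      case True
      then have "lindley i (c(j := t)) = lindley i (c(j := t'))"
        by (intro lindley_cong) auto
      with True show ?thesis by simp
    next
      case False
      have "dist (lindley i (c(j := t))) (lindley i (c(j := t'))) \<le> 1 * dist t t'"
        by (rule lipschitz_onD[OF Suc.IH]) simp_all
      with False show ?thesis by (simp add: dist_real_def)
    qed
    then show "dist (lindley (Suc i) (c(j := t))) (lindley (Suc i) (c(j := t'))) \<le> 1 * dist t t'"
      by (simp add: dist_real_def max_def abs_if split: if_splits)
  qed simp
qed (simp add: lipschitz_onI)

lemma borel_measurable_lindley:
  "(\<And>l. l \<in> {1..i} \<Longrightarrow> (\<lambda>s. c s l) \<in> borel_measurable M)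
    \<Longrightarrow> (\<lambda>s. lindley i (c s)) \<in> borel_measurable M"
  by (induction i) auto

lemma integrable_lindley:
  "finite_measure M \<Longrightarrow> (\<And>l. l \<in> {1..i} \<Longrightarrow> integrable M (\<lambda>s. c s l))
    \<Longrightarrow> integrable M (\<lambda>s. lindley i (c s))"
  by (induction i) (auto simp: finite_measure.integrable_const)

section \<open>Dilation order and product integrals\<close>

lemma integrable_lipschitz_compose:
  fixes \<phi> :: "real \<Rightarrow> real"
  assumes M: "finite_measure M" and \<phi>: "C-lipschitz_on UNIV \<phi>" and X: "integrable M X"
  shows "integrable M (\<lambda>s. \<phi> (X s))"
proof (rule Bochner_Integration.integrable_bound)
  show "integrable M (\<lambda>s. \<bar>\<phi> 0\<bar> + C * \<bar>X s\<bar>)"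
    by (intro Bochner_Integration.integrable_add finite_measure.integrable_const[OF M]
        integrable_mult_right Bochner_Integration.integrable_abs X)
  have "\<phi> \<in> borel_measurable borel"
    using \<phi> by (intro borel_measurable_continuous_onI lipschitz_on_continuous_on)
  with borel_measurable_integrable[OF X] show "(\<lambda>s. \<phi> (X s)) \<in> borel_measurable M"
    by (rule measurable_compose)
  have "\<bar>\<phi> x\<bar> \<le> \<bar>\<phi> 0\<bar> + C * \<bar>x\<bar>" for x
    using lipschitz_onD[OF \<phi>, of x 0] by (simp add: dist_real_def)
  then show "AE s in M. norm (\<phi> (X s)) \<le> norm (\<bar>\<phi> 0\<bar> + C * \<bar>X s\<bar>)"
    using lipschitz_on_nonneg[OF \<phi>] by simp
qed

lemma dil_le_integral_le:
  fixes \<phi> :: "real \<Rightarrow> real"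
  assumes dil: "dil_le M X Y" and M: "finite_measure M"
    and \<phi>: "convex_on UNIV \<phi>" "C-lipschitz_on UNIV \<phi>"
    and X: "integrable M X" and Y: "integrable M Y"
  shows "(\<integral>s. \<phi> (X s - integral\<^sup>L M X) \<partial>M) \<le> (\<integral>s. \<phi> (Y s - integral\<^sup>L M Y) \<partial>M)"
proof -
  have "integrable M (\<lambda>s. \<phi> (Z s - integral\<^sup>L M Z))" if "integrable M Z" for Z
    by (intro integrable_lipschitz_compose[OF M \<phi>(2)] Bochner_Integration.integrable_diff
        finite_measure.integrable_const[OF M] that)
  from dil[unfolded dil_le_def, THEN cx_le_def[THEN iffD1], rule_format, OF \<phi>(1) this[OF X] this[OF Y]]
  show ?thesis .
qed

lemma dil_le_chain_integral_le:
  fixes \<phi> :: "real \<Rightarrow> real"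
  assumes "a \<le> b" and M: "finite_measure M" and \<phi>: "convex_on UNIV \<phi>" "C-lipschitz_on UNIV \<phi>"
    and X: "\<And>i. i \<in> {a..b} \<Longrightarrow> integrable M (X i)"
    and dil: "\<And>i. i \<in> {a..<b} \<Longrightarrow> dil_le M (X i) (X (Suc i))"
  shows "(\<integral>s. \<phi> (X a s - integral\<^sup>L M (X a)) \<partial>M) \<le> (\<integral>s. \<phi> (X b s - integral\<^sup>L M (X b)) \<partial>M)"
  using assms(1)
proof (induction rule: dec_induct)
  case (step i)
  then have "(\<integral>s. \<phi> (X i s - integral\<^sup>L M (X i)) \<partial>M)
      \<le> (\<integral>s. \<phi> (X (Suc i) s - integral\<^sup>L M (X (Suc i))) \<partial>M)"
    by (intro dil_le_integral_le[OF dil M \<phi>] X) auto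
  with step.IH show ?case by linarith
qed simp

lemma nn_integral_PiM_split_coordinate:
  assumes K: "finite K" "j \<in> K"
    and R: "\<And>i. i \<in> K \<Longrightarrow> sigma_finite_measure (R i)" "\<And>i. i \<in> K \<Longrightarrow> sets (R i) = sets (N i)"
    and F: "F \<in> borel_measurable (PiM K N)"
  shows "(\<integral>\<^sup>+x. F x \<partial>PiM K R) = (\<integral>\<^sup>+x. (\<integral>\<^sup>+y. F (x(j := y)) \<partial>R j) \<partial>PiM (K - {j}) R)"
proof -
  \<comment> \<open>Factors outside \<open>K\<close> do not affect \<open>PiM K\<close>; null measures there make every factor sigma-finite.\<close>
  define R' where "R' i = (if i \<in> K then R i else null_measure (N i))" for i
  have "sigma_finite_measure (null_measure (N i))" for i
    by (intro finite_measure.sigma_finite_measure finite_measureI) simp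
  with R have R': "sigma_finite_measure (R' i)" "sets (R' i) = sets (N i)" for i
    by (auto simp: R'_def)
  interpret product_sigma_finite R'
    using R' by (auto simp: product_sigma_finite_def)
  have KK: "insert j (K - {j}) = K" and K': "finite (K - {j})" "j \<notin> K - {j}"
    using K by auto
  have "sets (PiM (insert j (K - {j})) R') = sets (PiM K N)"
    using R'(2) by (intro sets_PiM_cong[OF KK]) auto
  then have "measurable (PiM (insert j (K - {j})) R') (borel :: ennreal measure)
      = measurable (PiM K N) borel"
    by (rule measurable_cong_sets) simp
  with F have "F \<in> borel_measurable (PiM (insert j (K - {j})) R')"
    by (simp only:)
  then have "(\<integral>\<^sup>+x. F x \<partial>PiM K R') = (\<integral>\<^sup>+x. (\<integral>\<^sup>+y. F (x(j := y)) \<partial>R' j) \<partial>PiM (K - {j}) R')"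
    using product_nn_integral_insert[OF K'] unfolding KK by simp
  moreover have "PiM K R' = PiM K R" "PiM (K - {j}) R' = PiM (K - {j}) R"
    by (intro PiM_cong; simp add: R'_def)+
  moreover have "R' j = R j"
    using K(2) by (simp add: R'_def)
  ultimately show ?thesis
    by simp
qed

lemma nn_integral_PiM_update_le:
  assumes K: "finite K" "j \<in> K"
    and R: "\<And>i. i \<in> K \<Longrightarrow> sigma_finite_measure (R i)" "\<And>i. i \<in> K \<Longrightarrow> sets (R i) = sets (N i)"
    and P: "sigma_finite_measure P" "sets P = sets (N j)"
    and Q: "sigma_finite_measure Q" "sets Q = sets (N j)"
    and F: "F \<in> borel_measurable (PiM K N)"
    and le: "\<And>z. (\<integral>\<^sup>+y. F (z(j := y)) \<partial>P) \<le> (\<integral>\<^sup>+y. F (z(j := y)) \<partial>Q)"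
  shows "(\<integral>\<^sup>+x. F x \<partial>PiM K (R(j := P))) \<le> (\<integral>\<^sup>+x. F x \<partial>PiM K (R(j := Q)))"
proof -
  have split: "(\<integral>\<^sup>+x. F x \<partial>PiM K (R(j := S)))
      = (\<integral>\<^sup>+x. (\<integral>\<^sup>+y. F (x(j := y)) \<partial>S) \<partial>PiM (K - {j}) R)"
    if S: "sigma_finite_measure S" "sets S = sets (N j)" for S
  proof -
    have "sigma_finite_measure ((R(j := S)) i)" "sets ((R(j := S)) i) = sets (N i)" if "i \<in> K" for i
      using R S that by auto
    from nn_integral_PiM_split_coordinate[OF K this F]
    have "(\<integral>\<^sup>+x. F x \<partial>PiM K (R(j := S)))
        = (\<integral>\<^sup>+x. (\<integral>\<^sup>+y. F (x(j := y)) \<partial>S) \<partial>PiM (K - {j}) (R(j := S)))"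
      by (simp only: fun_upd_same)
    also have "PiM (K - {j}) (R(j := S)) = PiM (K - {j}) R"
      by (intro PiM_cong) auto
    finally show ?thesis .
  qed
  have "(\<integral>\<^sup>+x. F x \<partial>PiM K (R(j := P))) = (\<integral>\<^sup>+x. (\<integral>\<^sup>+y. F (x(j := y)) \<partial>P) \<partial>PiM (K - {j}) R)"
    by (rule split[OF P])
  also have "\<dots> \<le> (\<integral>\<^sup>+x. (\<integral>\<^sup>+y. F (x(j := y)) \<partial>Q) \<partial>PiM (K - {j}) R)"
    by (intro nn_integral_mono le)
  also have "\<dots> = (\<integral>\<^sup>+x. F x \<partial>PiM K (R(j := Q)))"
    by (rule split[OF Q, symmetric])
  finally show ?thesis .
qed

lemma nn_integral_PiM_mono_coordinatewise:
  assumes K: "finite K"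
    and P: "\<And>i. i \<in> K \<Longrightarrow> sigma_finite_measure (P i)" "\<And>i. i \<in> K \<Longrightarrow> sets (P i) = sets (N i)"
    and Q: "\<And>i. i \<in> K \<Longrightarrow> sigma_finite_measure (Q i)" "\<And>i. i \<in> K \<Longrightarrow> sets (Q i) = sets (N i)"
    and F: "F \<in> borel_measurable (PiM K N)"
    and le: "\<And>j z. j \<in> K \<Longrightarrow> (\<integral>\<^sup>+y. F (z(j := y)) \<partial>P j) \<le> (\<integral>\<^sup>+y. F (z(j := y)) \<partial>Q j)"
  shows "(\<integral>\<^sup>+x. F x \<partial>PiM K P) \<le> (\<integral>\<^sup>+x. F x \<partial>PiM K Q)"
proof -
  define H where "H S i = (if i \<in> S then P i else Q i)" for S i
  have hybrid: "(\<integral>\<^sup>+x. F x \<partial>PiM K (H S)) \<le> (\<integral>\<^sup>+x. F x \<partial>PiM K Q)"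
    if "finite S" "S \<subseteq> K" for S
    using that
  proof (induction S rule: finite_induct)
    case empty
    then show ?case by (simp add: H_def)
  next
    case (insert j S)
    have "j \<in> K" "S \<subseteq> K"
      using insert.prems by auto
    have "H (insert j S) = (H S)(j := P j)"
      by (auto simp: H_def fun_eq_iff)
    then have "(\<integral>\<^sup>+x. F x \<partial>PiM K (H (insert j S))) = (\<integral>\<^sup>+x. F x \<partial>PiM K ((H S)(j := P j)))"
      by (simp only:)
    also have "\<dots> \<le> (\<integral>\<^sup>+x. F x \<partial>PiM K ((H S)(j := Q j)))"
      using \<open>j \<in> K\<close> K P Q F
      by (intro nn_integral_PiM_update_le[where N = N] le) (auto simp: H_def)
    also have "(H S)(j := Q j) = H S"
      using insert.hyps(2) by (auto simp: H_def)
    also have "(\<integral>\<^sup>+x. F x \<partial>PiM K (H S)) \<le> (\<integral>\<^sup>+x. F x \<partial>PiM K Q)"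
      using insert.IH \<open>S \<subseteq> K\<close> .
    finally show ?case .
  qed
  have "PiM K (H K) = PiM K P"
    by (intro PiM_cong) (auto simp: H_def)
  with hybrid[OF K order_refl] show ?thesis
    by simp
qed

section \<open>Independent increments\<close>

lemma (in prob_space) indep_sets_reindex:
  assumes ind: "indep_sets G (f ` I)" and inj: "inj_on f I"
  shows "indep_sets (\<lambda>i. G (f i)) I"
  unfolding indep_sets_def
proof (intro conjI ballI allI impI)
  fix i assume "i \<in> I" then show "G (f i) \<subseteq> events" using ind unfolding indep_sets_def by auto
next
  fix J A assume J: "J \<subseteq> I" "J \<noteq> {}" "finite J" and A: "A \<in> Pi J (\<lambda>i. G (f i))"
  have injJ: "inj_on f J" using inj J inj_on_subset by blast
  define A' where "A' = (\<lambda>y. A (the_inv_into J f y))"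
  have A'f: "A' (f j) = A j" if "j \<in> J" for j using that injJ by (simp add: A'_def the_inv_into_f_f)
  have "A' \<in> Pi (f ` J) G" using A A'f by auto
  moreover have "f ` J \<subseteq> f ` I" "f ` J \<noteq> {}" "finite (f ` J)" using J by auto
  ultimately have "prob (\<Inter>y\<in>f ` J. A' y) = (\<Prod>y\<in>f ` J. prob (A' y))"
    using ind unfolding indep_sets_def by blast
  moreover have "(\<Inter>y\<in>f ` J. A' y) = (\<Inter>j\<in>J. A j)" using A'f by auto
  moreover have "(\<Prod>y\<in>f ` J. prob (A' y)) = (\<Prod>j\<in>J. prob (A j))"
    using A'f injJ by (simp add: prod.reindex)
  ultimately show "prob (\<Inter>j\<in>J. A j) = (\<Prod>j\<in>J. prob (A j))" by simp
qed

lemma (in prob_space) indep_vars_reindex: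
  assumes "indep_vars M' X (f ` I)" "inj_on f I"
  shows "indep_vars (\<lambda>i. M' (f i)) (\<lambda>i. X (f i)) I"
  using assms indep_sets_reindex[OF _ assms(2), of "\<lambda>y. {X y -` A \<inter> space M | A. A \<in> sets (M' y)}"]
  unfolding indep_vars_def2 by auto

lemma borel_measurable_lindley_PiM: "lindley k \<in> borel_measurable (PiM {1..k} (\<lambda>_. borel))"
  using borel_measurable_lindley[where c = "\<lambda>y. y" and M = "PiM {1..k} (\<lambda>_. borel)"]
  by (simp add: measurable_component_singleton)

lemma (in prob_space) nn_integral_lindley_indep:
  assumes indep: "indep_vars (\<lambda>_. borel) X {1..k}"
  shows "(\<integral>\<^sup>+s. ennreal (lindley k (\<lambda>l. X l s)) \<partial>M)
    = (\<integral>\<^sup>+y. ennreal (lindley k y) \<partial>PiM {1..k} (\<lambda>l. distr M borel (X l)))"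
proof (cases "k = 0")
  case False
  have X: "X l \<in> borel_measurable M" if "l \<in> {1..k}" for l
    using indep that by (auto simp: indep_vars_def)
  then have "distr M (PiM {1..k} (\<lambda>_. borel)) (\<lambda>s. \<lambda>l\<in>{1..k}. X l s)
      = PiM {1..k} (\<lambda>l. distr M borel (X l))"
    using indep_vars_iff_distr_eq_PiM'[where I = "{1..k}" and M' = "\<lambda>_. borel" and X = X] indep False
    by simp
  then have "(\<integral>\<^sup>+y. ennreal (lindley k y) \<partial>PiM {1..k} (\<lambda>l. distr M borel (X l)))
      = (\<integral>\<^sup>+y. ennreal (lindley k y) \<partial>distr M (PiM {1..k} (\<lambda>_. borel)) (\<lambda>s. \<lambda>l\<in>{1..k}. X l s))"
    by simp
  also have "\<dots> = (\<integral>\<^sup>+s. ennreal (lindley k (\<lambda>l\<in>{1..k}. X l s)) \<partial>M)"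
  proof (rule nn_integral_distr)
    show "(\<lambda>s. \<lambda>l\<in>{1..k}. X l s) \<in> measurable M (PiM {1..k} (\<lambda>_. borel))"
      using X by (rule measurable_restrict)
    have "(\<lambda>y. ennreal (lindley k y)) \<in> borel_measurable (PiM {1..k} (\<lambda>_. borel))"
      using borel_measurable_lindley_PiM by measurable
    then show "(\<lambda>y. ennreal (lindley k y))
        \<in> borel_measurable (distr M (PiM {1..k} (\<lambda>_. borel)) (\<lambda>s. \<lambda>l\<in>{1..k}. X l s))"
      using measurable_cong_sets[OF sets_distr refl] by blast
  qed
  also have "\<dots> = (\<integral>\<^sup>+s. ennreal (lindley k (\<lambda>l. X l s)) \<partial>M)"
    by (intro nn_integral_cong arg_cong[where f = ennreal] lindley_cong) simp
  finally show ?thesis ..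
qed simp

section \<open>Expected waiting times under the mean-based schedule\<close>

lemma finite_EW_OPT'_set:
  "finite {f \<tau> | \<tau>. \<tau> permutes {1..n::nat} \<and> (\<forall>i\<in>{1..k}. \<tau> i \<le> k)}"
proof (rule finite_subset)
  show "{f \<tau> | \<tau>. \<tau> permutes {1..n} \<and> (\<forall>i\<in>{1..k}. \<tau> i \<le> k)} \<subseteq> f ` {\<tau>. \<tau> permutes {1..n}}"
    by blast
qed (simp add: finite_permutations)

lemma exists_permutes_le:
  fixes \<tau> :: "nat \<Rightarrow> nat"
  assumes inj: "inj_on \<tau> {1..k}" and pos: "\<And>i. i \<in> {1..k} \<Longrightarrow> 0 < \<tau> i"
  shows "\<exists>\<sigma>. \<sigma> permutes {1..k} \<and> (\<forall>i\<in>{1..k}. \<sigma> i \<le> \<tau> i)"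
proof -
  define A where "A = {i\<in>{1..k}. \<tau> i \<le> k}"
  define P where "P = {1..k} - A"
  define R where "R = {1..k} - \<tau> ` A"
  have A: "A \<subseteq> {1..k}" "\<tau> ` A \<subseteq> {1..k}"
    using pos by (auto simp: A_def Suc_le_eq)
  have "card P = card R"
    using A card_image[OF inj_on_subset[OF inj A(1)]]
    by (simp add: P_def R_def card_Diff_subset finite_subset)
  then obtain g where g: "bij_betw g P R"
    using finite_same_card_bij[of P R] by (auto simp: P_def R_def)
  define \<sigma> where "\<sigma> i = (if i \<in> A then \<tau> i else if i \<in> P then g i else i)" for i
  have "bij_betw \<sigma> A (\<tau> ` A)"
    using inj_on_subset[OF inj A(1)] by (auto simp: \<sigma>_def bij_betw_def inj_on_def)
  moreover have "bij_betw \<sigma> P R"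
    using g by (rule bij_betw_cong[THEN iffD1, rotated]) (auto simp: \<sigma>_def P_def)
  ultimately have "bij_betw \<sigma> (A \<union> P) (\<tau> ` A \<union> R)"
    by (rule bij_betw_combine) (auto simp: R_def)
  moreover have "A \<union> P = {1..k}" "\<tau> ` A \<union> R = {1..k}"
    using A by (auto simp: P_def R_def)
  ultimately have "\<sigma> permutes {1..k}"
    by (intro bij_imp_permutes) (auto simp: \<sigma>_def P_def)
  moreover have "\<sigma> i \<le> \<tau> i" if "i \<in> {1..k}" for i
  proof (cases "i \<in> A")
    case False
    with that have "i \<in> P" "k < \<tau> i" by (auto simp: P_def A_def)
    then show ?thesis using bij_betwE[OF g] by (auto simp: \<sigma>_def R_def)
  qed (simp add: \<sigma>_def)
  ultimately show ?thesis by blast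
qed

lemma permutes_image_initial_segment:
  fixes \<sigma> :: "nat \<Rightarrow> nat"
  assumes \<sigma>: "\<sigma> permutes {1..n}" and "k \<le> n" "\<forall>i\<in>{1..k}. \<sigma> i \<le> k"
  shows "\<sigma> ` {1..k} = {1..k}"
proof (rule endo_inj_surj)
  show "\<sigma> ` {1..k} \<subseteq> {1..k}"
  proof
    fix y assume "y \<in> \<sigma> ` {1..k}"
    then obtain i where i: "i \<in> {1..k}" "y = \<sigma> i" by blast
    then have "i \<in> {1..n}"
      using \<open>k \<le> n\<close> by auto
    then have "\<sigma> i \<in> {1..n}"
      by (simp only: permutes_in_image[OF \<sigma>])
    with i assms(3) show "y \<in> {1..k}" by auto
  qed
qed (simp_all add: permutes_inj_on[OF \<sigma>])

lemma Min_permutes_attained: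
  assumes "finite S"
  obtains \<tau> where "\<tau> permutes S" "Min {f \<tau> | \<tau>. \<tau> permutes S} = f \<tau>"
proof -
  have eq: "{f \<tau> | \<tau>. \<tau> permutes S} = f ` {\<tau>. \<tau> permutes S}"
    by blast
  have "Min (f ` {\<tau>. \<tau> permutes S}) \<in> f ` {\<tau>. \<tau> permutes S}"
    by (intro Min_in finite_imageI finite_permutations assms) (use permutes_id[of S] in blast)
  then show ?thesis
    using that unfolding eq by blast
qed

locale appointment_model = prob_space M for M :: "'a measure" +
  fixes n :: nat and B :: "nat \<Rightarrow> 'a \<Rightarrow> real"
  assumes integrable_B: "i \<in> {1..n} \<Longrightarrow> integrable M (B i)"
begin

definition expected_wait :: "(nat \<Rightarrow> nat) \<Rightarrow> nat \<Rightarrow> real" where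
  "expected_wait \<tau> i = integral\<^sup>L M (wait B (mean_sched M B) \<tau> i)"

lemma expected_wait_Suc_0 [simp]: "expected_wait \<tau> (Suc 0) = 0"
proof -
  have "wait B (mean_sched M B) \<tau> (Suc 0) = (\<lambda>_. 0)"
    by (simp add: fun_eq_iff)
  then show ?thesis
    by (simp add: expected_wait_def)
qed

lemma expected_wait_nonneg: "0 \<le> expected_wait \<tau> i"
  unfolding expected_wait_def by (intro integral_nonneg_AE) (simp add: wait_nonneg)

lemma integrable_wait:
  assumes "\<tau> ` {1..k} \<subseteq> {1..n}"
  shows "integrable M (wait B x \<tau> (Suc k))"
proof -
  have "integrable M (\<lambda>s. lindley k (\<lambda>l. B (\<tau> l) s - x (\<tau> l)))"
    using assms
    by (intro integrable_lindley) (auto simp: image_subset_iff intro!: integrable_B finite_measure_axioms)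
  then show ?thesis
    by (simp add: wait_eq_lindley[abs_def])
qed

lemma integral_centred_B: "i \<in> {1..n} \<Longrightarrow> (\<integral>s. B i s - mean_sched M B i \<partial>M) = 0"
  by (simp add: mean_sched_def integrable_B prob_space)

lemma integral_idle_Suc_Suc:
  assumes "\<tau> ` {1..Suc j} \<subseteq> {1..n}"
  shows "integral\<^sup>L M (idle B (mean_sched M B) \<tau> (Suc (Suc j)))
    = expected_wait \<tau> (Suc (Suc j)) - expected_wait \<tau> (Suc j)"
proof -
  let ?C = "\<lambda>s. B (\<tau> (Suc j)) s - mean_sched M B (\<tau> (Suc j))"
  have \<tau>: "\<tau> (Suc j) \<in> {1..n}" "\<tau> ` {1..j} \<subseteq> {1..n}"
    using assms by (auto simp: image_subset_iff)
  have int: "integrable M (wait B (mean_sched M B) \<tau> (Suc (Suc j)))"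
    "integrable M (wait B (mean_sched M B) \<tau> (Suc j))" "integrable M ?C"
    using integrable_wait[OF assms] integrable_wait[OF \<tau>(2)] integrable_B[OF \<tau>(1)] by auto
  have "integral\<^sup>L M (idle B (mean_sched M B) \<tau> (Suc (Suc j)))
      = (\<integral>s. wait B (mean_sched M B) \<tau> (Suc (Suc j)) s - (wait B (mean_sched M B) \<tau> (Suc j) s + ?C s) \<partial>M)"
    by (rule arg_cong[where f = "integral\<^sup>L M"]) (auto simp: fun_eq_iff max_def)
  also have "\<dots> = expected_wait \<tau> (Suc (Suc j)) - (expected_wait \<tau> (Suc j) + integral\<^sup>L M ?C)"
    using int unfolding expected_wait_def
    by (simp add: Bochner_Integration.integral_diff Bochner_Integration.integral_add del: wait.simps)
  finally show ?thesis
    using integral_centred_B[OF \<tau>(1)] by simp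
qed

lemma sum_integral_idle:
  assumes "\<tau> ` {1..n} \<subseteq> {1..n}" "m \<le> n"
  shows "(\<Sum>i=1..m. integral\<^sup>L M (idle B (mean_sched M B) \<tau> i)) = expected_wait \<tau> m"
  using assms(2)
proof (induction m)
  case 0
  have "wait B (mean_sched M B) \<tau> 0 = (\<lambda>_. 0)"
    by (simp add: fun_eq_iff)
  then show ?case
    by (simp add: expected_wait_def)
next
  case (Suc m)
  show ?case
  proof (cases m)
    case (Suc j)
    then have "\<tau> ` {1..Suc j} \<subseteq> {1..n}"
      using assms(1) Suc.prems by auto
    with Suc.IH Suc.prems show ?thesis
      by (simp add: \<open>m = Suc j\<close> integral_idle_Suc_Suc)
  qed simp
qed

lemma cost_mean_sched:
  assumes "\<tau> ` {1..n} \<subseteq> {1..n}"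
  shows "cost M n B \<tau> (mean_sched M B) w
    = w * expected_wait \<tau> n + (1 - w) * (\<Sum>i=1..n. expected_wait \<tau> i)"
  using sum_integral_idle[OF assms order_refl] by (simp add: cost_def expected_wait_def)

lemma cost_le_if_expected_wait_le:
  assumes "\<sigma> ` {1..n} \<subseteq> {1..n}" "\<tau> ` {1..n} \<subseteq> {1..n}" "0 \<le> w" "w \<le> 1" "1 \<le> n"
    and le: "\<And>i. i \<in> {1..n} \<Longrightarrow> expected_wait \<sigma> i \<le> \<rho> * expected_wait \<tau> i"
  shows "cost M n B \<sigma> (mean_sched M B) w \<le> \<rho> * cost M n B \<tau> (mean_sched M B) w"
proof -
  have "w * expected_wait \<sigma> n \<le> w * (\<rho> * expected_wait \<tau> n)"
    using assms(3,5) le by (intro mult_left_mono) auto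
  moreover have "(1 - w) * (\<Sum>i=1..n. expected_wait \<sigma> i) \<le> (1 - w) * (\<Sum>i=1..n. \<rho> * expected_wait \<tau> i)"
    using assms(4) le by (intro mult_left_mono sum_mono) auto
  ultimately show ?thesis
    using assms(1,2) by (simp add: cost_mean_sched sum_distrib_left algebra_simps)
qed

lemma expected_wait_mono_slot:
  assumes "j \<le> k" "\<tau> ` {1..k} \<subseteq> {1..n}"
  shows "expected_wait \<tau> (Suc j) \<le> expected_wait \<tau> (Suc k)"
  using assms(1)
proof (induction rule: dec_induct)
  case (step i)
  let ?C = "\<lambda>s. B (\<tau> (Suc i)) s - mean_sched M B (\<tau> (Suc i))"
  have \<tau>: "\<tau> (Suc i) \<in> {1..n}" "\<tau> ` {1..i} \<subseteq> {1..n}" "\<tau> ` {1..Suc i} \<subseteq> {1..n}"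
    using assms(2) step.hyps by (auto simp: image_subset_iff)
  have "expected_wait \<tau> (Suc i) = (\<integral>s. wait B (mean_sched M B) \<tau> (Suc i) s + ?C s \<partial>M)"
    using integrable_wait[OF \<tau>(2)] integrable_B[OF \<tau>(1)] integral_centred_B[OF \<tau>(1)]
    by (simp add: expected_wait_def)
  also have "\<dots> \<le> expected_wait \<tau> (Suc (Suc i))"
    unfolding expected_wait_def
    using integrable_wait[OF \<tau>(2)] integrable_wait[OF \<tau>(3)] integrable_B[OF \<tau>(1)]
    by (intro integral_mono) auto
  finally show ?case
    using step.IH by linarith
qed simp

lemma integral_abs_centred_B:
  assumes "i \<in> {1..n}"
  shows "(\<integral>s. \<bar>B i s - mean_sched M B i\<bar> \<partial>M) = 2 * (\<integral>s. max 0 (B i s - mean_sched M B i) \<partial>M)"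
proof -
  have "(\<lambda>s. \<bar>B i s - mean_sched M B i\<bar>)
      = (\<lambda>s. 2 * max 0 (B i s - mean_sched M B i) - (B i s - mean_sched M B i))"
    by (auto simp: fun_eq_iff max_def)
  then show ?thesis
    using integrable_B[OF assms] integral_centred_B[OF assms] by simp
qed

lemma integral_abs_centred_B_eq_0:
  assumes zero: "expected_wait \<sigma> (Suc k) = 0" and \<sigma>: "\<sigma> ` {1..k} \<subseteq> {1..n}" and j: "j \<in> {1..k}"
  shows "(\<integral>s. \<bar>B (\<sigma> j) s - mean_sched M B (\<sigma> j)\<bar> \<partial>M) = 0"
proof -
  let ?C = "\<lambda>s. B (\<sigma> j) s - mean_sched M B (\<sigma> j)"
  have \<sigma>j: "\<sigma> j \<in> {1..n}" "\<sigma> ` {1..j} \<subseteq> {1..n}"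
    using \<sigma> j by (auto simp: image_subset_iff)
  have "(\<integral>s. max 0 (?C s) \<partial>M) \<le> expected_wait \<sigma> (Suc j)"
    unfolding expected_wait_def
  proof (rule integral_mono)
    show "integrable M (\<lambda>s. max 0 (?C s))"
      by (intro Bochner_Integration.integrable_max integrable_const
          Bochner_Integration.integrable_diff integrable_B[OF \<sigma>j(1)])
    show "integrable M (wait B (mean_sched M B) \<sigma> (Suc j))"
      by (rule integrable_wait[OF \<sigma>j(2)])
    show "max 0 (?C s) \<le> wait B (mean_sched M B) \<sigma> (Suc j) s" for s
      using positive_part_le_wait[where B = B and \<tau> = \<sigma> and x = "mean_sched M B"] j by simp
  qed
  also have "\<dots> \<le> expected_wait \<sigma> (Suc k)"
    using j \<sigma> by (intro expected_wait_mono_slot) simp_all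
  finally have "(\<integral>s. max 0 (?C s) \<partial>M) \<le> 0"
    using zero by simp
  moreover have "0 \<le> (\<integral>s. max 0 (?C s) \<partial>M)"
    by (intro integral_nonneg_AE) simp
  ultimately show ?thesis
    using integral_abs_centred_B[OF \<sigma>j(1)] by simp
qed

lemma expected_wait_le_sum_integral_abs:
  assumes \<tau>: "\<tau> ` {1..k} \<subseteq> {1..n}"
  shows "expected_wait \<tau> (Suc k) \<le> (\<Sum>l=1..k. \<integral>s. \<bar>B (\<tau> l) s - mean_sched M B (\<tau> l)\<bar> \<partial>M)"
proof -
  have int: "integrable M (\<lambda>s. \<bar>B (\<tau> l) s - mean_sched M B (\<tau> l)\<bar>)" if "l \<in> {1..k}" for l
    using that \<tau>
    by (intro Bochner_Integration.integrable_abs Bochner_Integration.integrable_diff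
        integrable_const integrable_B) (auto simp: image_subset_iff)
  have "expected_wait \<tau> (Suc k) \<le> (\<integral>s. (\<Sum>l=1..k. \<bar>B (\<tau> l) s - mean_sched M B (\<tau> l)\<bar>) \<partial>M)"
    unfolding expected_wait_def
  proof (rule integral_mono)
    show "integrable M (wait B (mean_sched M B) \<tau> (Suc k))"
      by (rule integrable_wait[OF \<tau>])
    show "integrable M (\<lambda>s. \<Sum>l=1..k. \<bar>B (\<tau> l) s - mean_sched M B (\<tau> l)\<bar>)"
      using int by (rule Bochner_Integration.integrable_sum)
    show "wait B (mean_sched M B) \<tau> (Suc k) s \<le> (\<Sum>l=1..k. \<bar>B (\<tau> l) s - mean_sched M B (\<tau> l)\<bar>)" for s
      by (rule wait_le_sum_abs)
  qed
  also have "\<dots> = (\<Sum>l=1..k. \<integral>s. \<bar>B (\<tau> l) s - mean_sched M B (\<tau> l)\<bar> \<partial>M)"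
    using int by (rule Bochner_Integration.integral_sum)
  finally show ?thesis .
qed

text \<open>If some sequence filling the first \<open>k\<close> slots with patients \<open>1..k\<close> has no expected waiting
  in slot \<open>k + 1\<close>, each of these service times equals its mean almost surely, so no sequence waits.\<close>
lemma expected_wait_id_eq_0:
  assumes \<sigma>: "\<sigma> ` {1..k} = {1..k}" and "k \<le> n" and zero: "expected_wait \<sigma> (Suc k) = 0"
  shows "expected_wait id (Suc k) = 0"
proof -
  have kn: "{1..k} \<subseteq> {1..n}"
    using \<open>k \<le> n\<close> by auto
  then have \<sigma>k: "\<sigma> ` {1..k} \<subseteq> {1..n}"
    by (simp only: \<sigma>)
  have abs0: "(\<integral>s. \<bar>B l s - mean_sched M B l\<bar> \<partial>M) = 0" if "l \<in> {1..k}" for l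
  proof -
    have "l \<in> \<sigma> ` {1..k}"
      using that by (simp only: \<sigma>)
    then obtain j where j: "j \<in> {1..k}" "l = \<sigma> j"
      by blast
    from integral_abs_centred_B_eq_0[OF zero \<sigma>k j(1)] show ?thesis
      by (simp only: j(2))
  qed
  have "expected_wait id (Suc k) \<le> (\<Sum>l=1..k. \<integral>s. \<bar>B l s - mean_sched M B l\<bar> \<partial>M)"
    using expected_wait_le_sum_integral_abs[where \<tau> = id and k = k] kn by simp
  also have "\<dots> = 0"
    using abs0 by (intro sum.neutral) simp
  finally show ?thesis
    using expected_wait_nonneg[of id "Suc k"] by linarith
qed

lemma EW_OPT'_le:
  "\<sigma> permutes {1..n} \<Longrightarrow> \<forall>i\<in>{1..k}. \<sigma> i \<le> k \<Longrightarrow> EW_OPT' M n B k \<le> expected_wait \<sigma> (Suc k)"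
  unfolding EW_OPT'_def expected_wait_def by (rule Min_le[OF finite_EW_OPT'_set]) auto

lemma EW_OPT'_attained:
  obtains \<sigma> where "\<sigma> permutes {1..n}" "\<forall>i\<in>{1..k}. \<sigma> i \<le> k" "EW_OPT' M n B k = expected_wait \<sigma> (Suc k)"
proof -
  have "EW_OPT' M n B k \<in> {expected_wait \<sigma> (Suc k) | \<sigma>. \<sigma> permutes {1..n} \<and> (\<forall>i\<in>{1..k}. \<sigma> i \<le> k)}"
    unfolding EW_OPT'_def expected_wait_def
    by (rule Min_in[OF finite_EW_OPT'_set]) (auto intro!: exI[of _ id] permutes_id)
  then show ?thesis
    using that by blast
qed

end

locale dil_ordered_appointment_model = appointment_model +
  assumes indep_B: "indep_vars (\<lambda>_. borel) B {1..n}"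
    and dil_le_B: "i \<in> {1..<n} \<Longrightarrow> dil_le M (B i) (B (Suc i))"
begin

lemma nn_integral_wait_eq_PiM:
  assumes "inj_on \<tau> {1..k}" "\<tau> ` {1..k} \<subseteq> {1..n}"
  shows "(\<integral>\<^sup>+s. ennreal (wait B x \<tau> (Suc k) s) \<partial>M)
    = (\<integral>\<^sup>+y. ennreal (lindley k y) \<partial>PiM {1..k} (\<lambda>l. distr M borel (\<lambda>s. B (\<tau> l) s - x (\<tau> l))))"
proof -
  have "indep_vars (\<lambda>_. borel) (\<lambda>l. B (\<tau> l)) {1..k}"
    using indep_vars_reindex[OF indep_vars_subset[OF indep_B assms(2)] assms(1)] .
  then have "indep_vars (\<lambda>_. borel) (\<lambda>l s. B (\<tau> l) s - x (\<tau> l)) {1..k}"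
    by (rule indep_vars_compose2) simp
  then show ?thesis
    by (simp add: wait_eq_lindley nn_integral_lindley_indep)
qed

lemma nn_integral_lindley_update_distr_mono:
  assumes "1 \<le> a" "a \<le> b" "b \<le> n"
  shows "(\<integral>\<^sup>+y. ennreal (lindley k (z(j := y))) \<partial>distr M borel (\<lambda>s. B a s - mean_sched M B a))
    \<le> (\<integral>\<^sup>+y. ennreal (lindley k (z(j := y))) \<partial>distr M borel (\<lambda>s. B b s - mean_sched M B b))"
proof -
  let ?\<psi> = "\<lambda>t. lindley k (z(j := t))"
  have eq: "(\<integral>\<^sup>+y. ennreal (?\<psi> y) \<partial>distr M borel (\<lambda>s. B c s - mean_sched M B c))
      = ennreal (\<integral>s. ?\<psi> (B c s - integral\<^sup>L M (B c)) \<partial>M)" if "c \<in> {1..n}" for c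
  proof -
    have \<psi>: "?\<psi> \<in> borel_measurable borel"
      using lipschitz_lindley_update by (intro borel_measurable_continuous_onI lipschitz_on_continuous_on)
    have C: "(\<lambda>s. B c s - mean_sched M B c) \<in> borel_measurable M"
      using borel_measurable_integrable[OF integrable_B[OF that]] by (intro borel_measurable_diff) auto
    have "integrable M (\<lambda>s. ?\<psi> (B c s - mean_sched M B c))"
      using integrable_B[OF that]
      by (intro integrable_lipschitz_compose[OF finite_measure_axioms lipschitz_lindley_update]) simp
    moreover have "(\<integral>\<^sup>+y. ennreal (?\<psi> y) \<partial>distr M borel (\<lambda>s. B c s - mean_sched M B c))
        = (\<integral>\<^sup>+s. ennreal (?\<psi> (B c s - mean_sched M B c)) \<partial>M)"
      using \<psi> C by (intro nn_integral_distr) auto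
    ultimately show ?thesis
      by (simp add: nn_integral_eq_integral lindley_nonneg mean_sched_def)
  qed
  have "(\<integral>s. ?\<psi> (B a s - integral\<^sup>L M (B a)) \<partial>M) \<le> (\<integral>s. ?\<psi> (B b s - integral\<^sup>L M (B b)) \<partial>M)"
    by (rule dil_le_chain_integral_le[OF _ finite_measure_axioms convex_on_lindley_update
          lipschitz_lindley_update]) (use assms integrable_B dil_le_B in auto)
  then show ?thesis
    using assms eq[of a] eq[of b] by (auto intro: ennreal_leI)
qed

lemma expected_wait_mono_sequence:
  assumes \<sigma>: "inj_on \<sigma> {1..k}" "\<sigma> ` {1..k} \<subseteq> {1..n}"
    and \<tau>: "inj_on \<tau> {1..k}" "\<tau> ` {1..k} \<subseteq> {1..n}"
    and le: "\<And>l. l \<in> {1..k} \<Longrightarrow> \<sigma> l \<le> \<tau> l"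
  shows "expected_wait \<sigma> (Suc k) \<le> expected_wait \<tau> (Suc k)"
proof -
  let ?D = "\<lambda>a. distr M borel (\<lambda>s. B a s - mean_sched M B a)"
  have D: "prob_space (?D a)" if "a \<in> {1..n}" for a
    using integrable_B[OF that] by (intro prob_space_distr) auto
  have nn_integral_wait: "(\<integral>\<^sup>+s. ennreal (wait B (mean_sched M B) \<rho> (Suc k) s) \<partial>M)
      = ennreal (expected_wait \<rho> (Suc k))" if "\<rho> ` {1..k} \<subseteq> {1..n}" for \<rho>
    unfolding expected_wait_def
    by (rule nn_integral_eq_integral[OF integrable_wait[OF that]]) (simp add: wait_nonneg)
  have "ennreal (expected_wait \<sigma> (Suc k))
      = (\<integral>\<^sup>+y. ennreal (lindley k y) \<partial>PiM {1..k} (\<lambda>l. ?D (\<sigma> l)))"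
    using nn_integral_wait[OF \<sigma>(2)] nn_integral_wait_eq_PiM[OF \<sigma>] by simp
  also have "\<dots> \<le> (\<integral>\<^sup>+y. ennreal (lindley k y) \<partial>PiM {1..k} (\<lambda>l. ?D (\<tau> l)))"
  proof (rule nn_integral_PiM_mono_coordinatewise[where N = "\<lambda>_. borel"])
    show "(\<lambda>y. ennreal (lindley k y)) \<in> borel_measurable (PiM {1..k} (\<lambda>_. borel))"
      using borel_measurable_lindley_PiM by measurable
    show "sigma_finite_measure (?D (\<sigma> l))" "sigma_finite_measure (?D (\<tau> l))" if "l \<in> {1..k}" for l
      using that \<sigma>(2) \<tau>(2) by (auto simp: image_subset_iff intro!: prob_space_imp_sigma_finite D)
    show "(\<integral>\<^sup>+y. ennreal (lindley k (z(l := y))) \<partial>?D (\<sigma> l))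
        \<le> (\<integral>\<^sup>+y. ennreal (lindley k (z(l := y))) \<partial>?D (\<tau> l))" if "l \<in> {1..k}" for l z
      using that \<sigma>(2) \<tau>(2) le
      by (intro nn_integral_lindley_update_distr_mono) (auto simp: image_subset_iff)
  qed simp_all
  also have "\<dots> = ennreal (expected_wait \<tau> (Suc k))"
    using nn_integral_wait[OF \<tau>(2)] nn_integral_wait_eq_PiM[OF \<tau>] by simp
  finally show ?thesis
    by (simp add: ennreal_le_iff expected_wait_nonneg)
qed

lemma EW_OPT'_le_expected_wait:
  assumes \<tau>: "\<tau> permutes {1..n}" and "k \<le> n"
  shows "EW_OPT' M n B k \<le> expected_wait \<tau> (Suc k)"
proof -
  have kn: "{1..k} \<subseteq> {1..n}"
    using \<open>k \<le> n\<close> by auto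
  then have \<tau>k: "inj_on \<tau> {1..k}" "\<tau> ` {1..k} \<subseteq> {1..n}"
    using permutes_inj_on[OF \<tau>] image_mono[OF kn, of \<tau>] permutes_image[OF \<tau>] by auto
  then obtain \<sigma> where \<sigma>: "\<sigma> permutes {1..k}" "\<forall>i\<in>{1..k}. \<sigma> i \<le> \<tau> i"
    using exists_permutes_le[of \<tau> k] by fastforce
  have "\<sigma> permutes {1..n}"
    using permutes_subset[OF \<sigma>(1) kn] .
  moreover have "\<forall>i\<in>{1..k}. \<sigma> i \<le> k"
  proof
    fix i assume "i \<in> {1..k}"
    then have "\<sigma> i \<in> {1..k}"
      by (simp only: permutes_in_image[OF \<sigma>(1)])
    then show "\<sigma> i \<le> k" by simp
  qed
  ultimately have "EW_OPT' M n B k \<le> expected_wait \<sigma> (Suc k)"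
    by (rule EW_OPT'_le)
  also have "\<dots> \<le> expected_wait \<tau> (Suc k)"
  proof (rule expected_wait_mono_sequence[OF permutes_inj_on[OF \<sigma>(1)] _ \<tau>k])
    show "\<sigma> ` {1..k} \<subseteq> {1..n}"
      unfolding permutes_image[OF \<sigma>(1)] by (rule kn)
  qed (use \<sigma>(2) in blast)
  finally show ?thesis .
qed

lemma expected_wait_id_le_ratio:
  assumes \<tau>: "\<tau> permutes {1..n}" and "k \<le> n"
    and ratio: "EW_SVF M B k / EW_OPT' M n B k \<le> \<rho>"
  shows "expected_wait id (Suc k) \<le> \<rho> * expected_wait \<tau> (Suc k)"
proof -
  obtain \<sigma> where \<sigma>: "\<sigma> permutes {1..n}" "\<forall>i\<in>{1..k}. \<sigma> i \<le> k"
    and opt: "EW_OPT' M n B k = expected_wait \<sigma> (Suc k)"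
    by (rule EW_OPT'_attained)
  have ratio': "expected_wait id (Suc k) / expected_wait \<sigma> (Suc k) \<le> \<rho>"
    using ratio unfolding opt by (simp add: EW_SVF_def expected_wait_def)
  have "0 \<le> expected_wait id (Suc k) / expected_wait \<sigma> (Suc k)"
    by (intro divide_nonneg_nonneg expected_wait_nonneg)
  with ratio' have "0 \<le> \<rho>"
    by linarith
  show ?thesis
  proof (cases "expected_wait \<sigma> (Suc k) = 0")
    case True
    \<comment> \<open>The ratio hypothesis is void here, since \<open>x / 0 = 0\<close>.\<close>
    have "\<sigma> ` {1..k} = {1..k}"
      by (rule permutes_image_initial_segment[OF \<sigma>(1) \<open>k \<le> n\<close> \<sigma>(2)])
    from expected_wait_id_eq_0[OF this \<open>k \<le> n\<close> True] show ?thesis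
      using \<open>0 \<le> \<rho>\<close> expected_wait_nonneg by simp
  next
    case False
    then have "0 < expected_wait \<sigma> (Suc k)"
      using expected_wait_nonneg[of \<sigma> "Suc k"] by linarith
    then have "expected_wait id (Suc k) \<le> \<rho> * expected_wait \<sigma> (Suc k)"
      using ratio' by (simp add: pos_divide_le_eq)
    also have "\<dots> \<le> \<rho> * expected_wait \<tau> (Suc k)"
      using EW_OPT'_le_expected_wait[OF \<tau> \<open>k \<le> n\<close>] \<open>0 \<le> \<rho>\<close> unfolding opt by (rule mult_left_mono)
    finally show ?thesis .
  qed
qed

lemma expected_wait_id_le:
  assumes \<tau>: "\<tau> permutes {1..n}" and i: "i \<in> {1..n}"
    and ratio: "\<forall>k\<in>{1..n-1}. EW_SVF M B k / EW_OPT' M n B k \<le> \<rho>"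
  shows "expected_wait id i \<le> \<rho> * expected_wait \<tau> i"
proof (cases "i = 1")
  case False
  with i obtain k where "i = Suc k" "k \<in> {1..n-1}"
    by (cases i) auto
  then have "k \<le> n" "EW_SVF M B k / EW_OPT' M n B k \<le> \<rho>"
    using ratio by auto
  from expected_wait_id_le_ratio[OF \<tau> this] show ?thesis
    by (simp add: \<open>i = Suc k\<close>)
qed simp

end

theorem lemma3p1:
  fixes M :: "'a measure" and n :: nat and w \<rho>' :: real and B :: "nat \<Rightarrow> 'a \<Rightarrow> real"
  assumes "prob_space M"
    and "n \<ge> 1"
    and "0 < w" and "w < 1"
    and "\<forall>i\<in>{1..n}. B i \<in> borel_measurable M"
    and "prob_space.indep_vars M (\<lambda>_. borel) B {1..n}"
    and "\<forall>i\<in>{1..n}. integrable M (B i)"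
    and "\<forall>i\<in>{1..n}. integrable M (\<lambda>s. (B i s)\<^sup>2)"
    and "\<forall>i\<in>{1..<n}. dil_le M (B i) (B (Suc i))"
    and "0 < Min {cost M n B \<tau> (mean_sched M B) w | \<tau>. \<tau> permutes {1..n}}"
    and "\<forall>k\<in>{1..n-1}. EW_SVF M B k / EW_OPT' M n B k \<le> \<rho>'"
  shows "rho M n B w \<le> \<rho>'"
proof -
  interpret dil_ordered_appointment_model M n B
    by (intro dil_ordered_appointment_model.intro appointment_model.intro
        dil_ordered_appointment_model_axioms.intro appointment_model_axioms.intro)
      (use assms(1,6,7,9) in auto)
  obtain \<tau> where \<tau>: "\<tau> permutes {1..n}"
    "Min {cost M n B \<tau> (mean_sched M B) w | \<tau>. \<tau> permutes {1..n}} = cost M n B \<tau> (mean_sched M B) w"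
    by (rule Min_permutes_attained[where f = "\<lambda>\<tau>. cost M n B \<tau> (mean_sched M B) w", OF finite_atLeastAtMost])
  have "cost M n B id (mean_sched M B) w \<le> \<rho>' * cost M n B \<tau> (mean_sched M B) w"
    using \<tau>(1) assms(2-4) expected_wait_id_le[OF \<tau>(1) _ assms(11)]
    by (intro cost_le_if_expected_wait_le) (auto simp: permutes_image)
  then show ?thesis
    using assms(10) unfolding rho_def \<tau>(2) by (simp add: pos_divide_le_eq)
qed

end
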